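(* Let $K$ be a polygonal element and suppose $\widetilde V(K)\subset V(K)$, $\widetilde{\bm W}(K)\subset\bm W(K)$ satisfy: $\bm n\times V(K)\subset\bm M(\partial K)$ and $\bm n\times\bm W(K)\times\bm n\subset\bm M(\partial K)$; $\nabla\times V(K)\subset\widetilde{\bm W}(K)$ and $\nabla\times\bm W(K)\subset\widetilde V(K)$; and for every $\bm\mu\in\bm M(\partial K)$, $\bm n\times\bm\mu=0$ implies $\bm\mu=\bm0$. Then $\mathrm{tr}:\widetilde V^\perp(K)\times\widetilde{\bm W}^\perp(K)\to\bm M(\partial K)$ is an isomorphism if and only if: $\gamma$ is injective on $\widetilde V^\perp(K)$, $\gamma$ is injective on $\widetilde{\bm W}^\perp(K)$, and $\gamma\widetilde V^\perp(K)\oplus\gamma\widetilde{\bm W}^\perp(K)=\bm M(\partial K)$.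
   Context: Conventions in 2D: $\nabla\times\bm v=-\partial_yv_1+\partial_xv_2$, $\nabla\times p=(\partial_yp,-\partial_xp)^T$, $\bm n\times\bm v=-n_2v_1+n_1v_2$, $\bm n\times p=(n_2p,-n_1p)^T$, $\bm n\times\bm w\times\bm n:=\bm w-(\bm w\cdot\bm n)\bm n$, with $\bm n$ the unit outward normal of $K$. $V(K)\subset H^1(K)$, $\bm W(K)\subset\bm H(\mathrm{curl};K)$ are finite-dimensional polynomial spaces and $\bm M(\partial K)$ a finite-dimensional space of vector functions on $\partial K$. $\perp$ denotes $L^2(K)$-orthogonal complement in $V(K)$, resp. $\bm W(K)$. $\mathrm{tr}(v,\bm w):=(\bm n\times v+\bm n\times\bm w\times\bm n)|_{\partial K}$. $\gamma$ denotes the map $v\mapsto\bm n\times v|_{\partial K}$ on scalar functions and $\bm w\mapsto\bm n\times\bm w\times\bm n|_{\partial K}$ on vector functions; $\gamma\widetilde V^\perp(K)$, $\gamma\widetilde{\bm W}^\perp(K)$ are the images. *)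

theory Defs
  imports "HOL-Analysis.Analysis"
begin

type_synonym pt = "real^2"

text \<open>A polygon is given by its list of vertices vs (in cyclic order).
  Edge i joins vertex i to vertex i+1 (mod the number of vertices).\<close>

definition nxt :: "pt list \<Rightarrow> nat \<Rightarrow> nat" where
  "nxt vs i = Suc i mod length vs"

definition edge :: "pt list \<Rightarrow> nat \<Rightarrow> pt set" where
  "edge vs i = closed_segment (vs ! i) (vs ! nxt vs i)"

definition oedge :: "pt list \<Rightarrow> nat \<Rightarrow> pt set" where
  "oedge vs i = open_segment (vs ! i) (vs ! nxt vs i)"

definition simple_polygon :: "pt list \<Rightarrow> bool" where
  "simple_polygon vs \<longleftrightarrow> length vs \<ge> 3 \<and> distinct vs \<and>
     (\<forall>i<length vs. \<forall>j<length vs. i \<noteq> j \<longrightarrow>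
        edge vs i \<inter> edge vs j \<subseteq> {vs ! i, vs ! nxt vs i} \<inter> {vs ! j, vs ! nxt vs j})"

definition poly_boundary :: "pt list \<Rightarrow> pt set" where
  "poly_boundary vs = (\<Union>i<length vs. edge vs i)"

definition poly_elem :: "pt list \<Rightarrow> pt set" where
  "poly_elem vs = inside (poly_boundary vs)"

text \<open>Boundary without the vertices (the normal is only defined there; vertices are a
  null set of the boundary).\<close>
definition Gam :: "pt list \<Rightarrow> pt set" where
  "Gam vs = (\<Union>i<length vs. oedge vs i)"

definition edge_normal :: "pt list \<Rightarrow> nat \<Rightarrow> pt" where
  "edge_normal vs i = (SOME \<nu>. norm \<nu> = 1 \<and> \<nu> \<bullet> (vs ! nxt vs i - vs ! i) = 0 \<and>
      (\<forall>\<^sub>F t in at_right 0. midpoint (vs ! i) (vs ! nxt vs i) + t *\<^sub>R \<nu> \<notin> poly_elem vs))"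

definition nrm :: "pt list \<Rightarrow> pt \<Rightarrow> pt" where
  "nrm vs x = (if \<exists>i<length vs. x \<in> oedge vs i
      then edge_normal vs (SOME i. i < length vs \<and> x \<in> oedge vs i) else 0)"

definition poly2 :: "(pt \<Rightarrow> real) \<Rightarrow> bool" where
  "poly2 f \<longleftrightarrow> (\<exists>N c. \<forall>x. f x = (\<Sum>i\<le>N. \<Sum>j\<le>N. c i j * (x$1)^i * (x$2)^j))"

definition polyvec :: "(pt \<Rightarrow> pt) \<Rightarrow> bool" where
  "polyvec w \<longleftrightarrow> poly2 (\<lambda>x. w x $ 1) \<and> poly2 (\<lambda>x. w x $ 2)"

definition fdspace :: "('a \<Rightarrow> 'b::real_vector) set \<Rightarrow> bool" where
  "fdspace V \<longleftrightarrow> (\<exists>B. finite B \<and> V = {(\<lambda>x. \<Sum>b\<in>B. c b *\<^sub>R b x) | c. True})"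

definition pd :: "2 \<Rightarrow> (pt \<Rightarrow> real) \<Rightarrow> pt \<Rightarrow> real" where
  "pd k f x = deriv (\<lambda>t. f (x + t *\<^sub>R axis k 1)) 0"

definition curl_v :: "(pt \<Rightarrow> pt) \<Rightarrow> pt \<Rightarrow> real" where
  "curl_v w x = - pd 2 (\<lambda>y. w y $ 1) x + pd 1 (\<lambda>y. w y $ 2) x"

definition curl_s :: "(pt \<Rightarrow> real) \<Rightarrow> pt \<Rightarrow> pt" where
  "curl_s p x = vector [pd 2 p x, - pd 1 p x]"

definition cross_vv :: "pt \<Rightarrow> pt \<Rightarrow> real" where
  "cross_vv n v = - n$2 * v$1 + n$1 * v$2"

definition cross_vs :: "pt \<Rightarrow> real \<Rightarrow> pt" where
  "cross_vs n p = vector [n$2 * p, - n$1 * p]"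

text \<open>Restriction to a set (functions on the boundary are represented as functions
  vanishing off the boundary).\<close>
definition restr :: "'a set \<Rightarrow> ('a \<Rightarrow> 'b::zero) \<Rightarrow> 'a \<Rightarrow> 'b" where
  "restr S f x = (if x \<in> S then f x else 0)"

definition gam_s :: "pt list \<Rightarrow> (pt \<Rightarrow> real) \<Rightarrow> pt \<Rightarrow> pt" where
  "gam_s vs v = restr (Gam vs) (\<lambda>x. cross_vs (nrm vs x) (v x))"

text \<open>gamma on vectors: w |-> n x w x n = w - (w.n) n on the boundary\<close>
definition gam_v :: "pt list \<Rightarrow> (pt \<Rightarrow> pt) \<Rightarrow> pt \<Rightarrow> pt" where
  "gam_v vs w = restr (Gam vs) (\<lambda>x. w x - (w x \<bullet> nrm vs x) *\<^sub>R nrm vs x)"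

definition trc :: "pt list \<Rightarrow> (pt \<Rightarrow> real) \<Rightarrow> (pt \<Rightarrow> pt) \<Rightarrow> pt \<Rightarrow> pt" where
  "trc vs v w = (\<lambda>x. gam_s vs v x + gam_v vs w x)"

definition perp_s :: "pt set \<Rightarrow> (pt \<Rightarrow> real) set \<Rightarrow> (pt \<Rightarrow> real) set \<Rightarrow> (pt \<Rightarrow> real) set" where
  "perp_s K V Vt = {v \<in> V. \<forall>u\<in>Vt. integral K (\<lambda>x. v x * u x) = 0}"

definition perp_v :: "pt set \<Rightarrow> (pt \<Rightarrow> pt) set \<Rightarrow> (pt \<Rightarrow> pt) set \<Rightarrow> (pt \<Rightarrow> pt) set" where
  "perp_v K W Wt = {w \<in> W. \<forall>u\<in>Wt. integral K (\<lambda>x. w x \<bullet> u x) = 0}"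

end

theory Submission
  imports Defs "HOL-Library.Function_Algebras"
begin

(* The trace map tr(v, w) = gamma v + gamma w is the sum of two additive maps defined on the
   groups Vt-perp and Wt-perp. For any such sum map, injectivity means that both summands are
   injective and that their images meet only in 0, and its image is the sum of the two images;
   so the criterion is pure linear algebra. The only analytic input is that the L2-orthogonal
   complements are closed under subtraction, which needs the products of polynomials to be
   integrable over the bounded open element K. *)

lemma inj_on_sum_of_additive_iff:
  fixes f :: "'a::ab_group_add \<Rightarrow> 'c::ab_group_add" and g :: "'b::ab_group_add \<Rightarrow> 'c"
  assumes f: "Modules.additive f" and g: "Modules.additive g"
    and P: "0 \<in> P" "\<And>x y. x \<in> P \<Longrightarrow> y \<in> P \<Longrightarrow> x - y \<in> P"
    and Q: "0 \<in> Q" "\<And>x y. x \<in> Q \<Longrightarrow> y \<in> Q \<Longrightarrow> x - y \<in> Q"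
  shows "inj_on (\<lambda>(x, y). f x + g y) (P \<times> Q) \<longleftrightarrow>
      inj_on f P \<and> inj_on g Q \<and> f ` P \<inter> g ` Q = {0}"
proof
  assume inj: "inj_on (\<lambda>(x, y). f x + g y) (P \<times> Q)"
  have "inj_on f P"
  proof (rule inj_onI)
    fix x x' assume "x \<in> P" "x' \<in> P" "f x = f x'"
    then show "x = x'" using inj_onD[OF inj, of "(x, 0)" "(x', 0)"] Q(1) by auto
  qed
  moreover have "inj_on g Q"
  proof (rule inj_onI)
    fix y y' assume "y \<in> Q" "y' \<in> Q" "g y = g y'"
    then show "y = y'" using inj_onD[OF inj, of "(0, y)" "(0, y')"] P(1) by auto
  qed
  moreover have "f ` P \<inter> g ` Q \<subseteq> {0}"
  proof
    fix a assume "a \<in> f ` P \<inter> g ` Q"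
    then obtain x y where x: "x \<in> P" and y: "y \<in> Q" and a: "a = f x" "a = g y" by auto
    have "- y \<in> Q" using Q(2)[OF Q(1) y] by simp
    moreover have "f x + g (- y) = f 0 + g 0"
      using a by (simp add: additive.minus[OF g] additive.zero[OF f] additive.zero[OF g])
    ultimately have "x = 0" using inj_onD[OF inj, of "(x, - y)" "(0, 0)"] x P(1) Q(1) by auto
    then show "a \<in> {0}" using a additive.zero[OF f] by simp
  qed
  moreover have "0 \<in> f ` P \<inter> g ` Q"
    using P(1) Q(1) additive.zero[OF f] additive.zero[OF g] by (metis IntI image_eqI)
  ultimately show "inj_on f P \<and> inj_on g Q \<and> f ` P \<inter> g ` Q = {0}" by blast
next
  assume "inj_on f P \<and> inj_on g Q \<and> f ` P \<inter> g ` Q = {0}"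
  then have injf: "inj_on f P" and injg: "inj_on g Q" and meet: "f ` P \<inter> g ` Q = {0}" by auto
  show "inj_on (\<lambda>(x, y). f x + g y) (P \<times> Q)"
  proof (rule inj_onI, clarify)
    fix x y x' y' assume x: "x \<in> P" "x' \<in> P" and y: "y \<in> Q" "y' \<in> Q"
      and eq: "f x + g y = f x' + g y'"
    have "f (x - x') = g (y' - y)"
      using eq by (simp add: additive.diff[OF f] additive.diff[OF g] algebra_simps)
    moreover have "f (x - x') \<in> f ` P" "g (y' - y) \<in> g ` Q" using x y P(2) Q(2) by auto
    ultimately have "f (x - x') = 0" "g (y' - y) = 0" using meet by auto
    then have "f x = f x'" "g y = g y'" by (simp_all add: additive.diff[OF f] additive.diff[OF g])
    then show "x = x' \<and> y = y'" using injf injg x y by (auto dest: inj_onD)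
  qed
qed

lemma bij_betw_sum_of_additive_iff:
  fixes f :: "'a::ab_group_add \<Rightarrow> 'c::ab_group_add" and g :: "'b::ab_group_add \<Rightarrow> 'c"
  assumes "Modules.additive f" "Modules.additive g"
    and "0 \<in> P" "\<And>x y. x \<in> P \<Longrightarrow> y \<in> P \<Longrightarrow> x - y \<in> P"
    and "0 \<in> Q" "\<And>x y. x \<in> Q \<Longrightarrow> y \<in> Q \<Longrightarrow> x - y \<in> Q"
  shows "bij_betw (\<lambda>(x, y). f x + g y) (P \<times> Q) M \<longleftrightarrow>
      inj_on f P \<and> inj_on g Q \<and> f ` P \<inter> g ` Q = {0} \<and>
      {a + b | a b. a \<in> f ` P \<and> b \<in> g ` Q} = M"
proof -
  have "(\<lambda>(x, y). f x + g y) ` (P \<times> Q) = {a + b | a b. a \<in> f ` P \<and> b \<in> g ` Q}"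
    by force
  then show ?thesis
    by (simp only: bij_betw_def inj_on_sum_of_additive_iff[OF assms] conj_assoc)
qed

lemma poly2_continuous: "poly2 f \<Longrightarrow> continuous_on UNIV f"
proof -
  assume "poly2 f"
  then obtain N c where "f = (\<lambda>x. \<Sum>i\<le>N. \<Sum>j\<le>N. c i j * (x$1)^i * (x$2)^j)"
    unfolding poly2_def by blast
  then show ?thesis by (simp add: continuous_intros)
qed

lemma polyvec_continuous: "polyvec w \<Longrightarrow> continuous_on UNIV w"
proof -
  assume "polyvec w"
  then have "continuous_on UNIV (\<lambda>x. w x $ i)" for i
    using exhaust_2[of i] poly2_continuous unfolding polyvec_def by fastforce
  then show ?thesis by (rule continuous_on_vec_lambda[where f = "\<lambda>i x. w x $ i", simplified])
qed

lemma continuous_integrable_on_bounded: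
  fixes f :: "'a::euclidean_space \<Rightarrow> 'b::euclidean_space"
  assumes "continuous_on UNIV f" "bounded S" "S \<in> sets lebesgue"
  shows "f integrable_on S"
proof -
  obtain r where "S \<subseteq> cbox (- r) r" using bounded_subset_cbox_symmetric[OF assms(2)] by blast
  moreover have "f absolutely_integrable_on cbox (- r) r"
    using assms(1) continuous_on_subset by (blast intro: absolutely_integrable_continuous)
  ultimately have "f absolutely_integrable_on S"
    using set_integrable_subset assms(3) by blast
  then show ?thesis using set_lebesgue_integral_eq_integral(1) by blast
qed

lemma integral_bilinear_diff_left:
  fixes a b :: "'a::euclidean_space \<Rightarrow> 'b::real_normed_vector" and u :: "'a \<Rightarrow> 'c::real_normed_vector"
    and prod :: "'b \<Rightarrow> 'c \<Rightarrow> 'd::euclidean_space"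
  assumes "bounded_bilinear prod" "bounded S" "S \<in> sets lebesgue"
    and "continuous_on UNIV a" "continuous_on UNIV b" "continuous_on UNIV u"
  shows "integral S (\<lambda>x. prod (a x - b x) (u x)) =
      integral S (\<lambda>x. prod (a x) (u x)) - integral S (\<lambda>x. prod (b x) (u x))"
proof -
  have "(\<lambda>x. prod (c x) (u x)) integrable_on S" if "continuous_on UNIV c" for c
    using bounded_bilinear.continuous_on[OF assms(1) that assms(6)] assms(2,3)
    by (rule continuous_integrable_on_bounded)
  then show ?thesis
    using assms(4,5) by (simp add: bounded_bilinear.diff_left[OF assms(1)] integral_diff)
qed

lemma fdspace_zero: "fdspace V \<Longrightarrow> 0 \<in> V"
  unfolding fdspace_def by (auto intro!: exI[of _ "\<lambda>_. 0"] simp: zero_fun_def)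

lemma fdspace_diff:
  assumes "fdspace V" "a \<in> V" "b \<in> V"
  shows "a - b \<in> V"
proof -
  obtain B where V: "V = {(\<lambda>x. \<Sum>e\<in>B. c e *\<^sub>R e x) | c. True}"
    using assms(1) unfolding fdspace_def by blast
  then obtain ca cb where "a = (\<lambda>x. \<Sum>e\<in>B. ca e *\<^sub>R e x)" "b = (\<lambda>x. \<Sum>e\<in>B. cb e *\<^sub>R e x)"
    using assms(2,3) by blast
  then have "a - b = (\<lambda>x. \<Sum>e\<in>B. (ca e - cb e) *\<^sub>R e x)"
    by (simp add: fun_eq_iff sum_subtractf scaleR_diff_left)
  then show ?thesis unfolding V by (intro CollectI exI[of _ "\<lambda>e. ca e - cb e"]) simp
qed

lemma zero_in_perp_s: "fdspace V \<Longrightarrow> 0 \<in> perp_s K V Vt"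
  unfolding perp_s_def by (simp add: fdspace_zero)

lemma zero_in_perp_v: "fdspace W \<Longrightarrow> 0 \<in> perp_v K W Wt"
  unfolding perp_v_def by (simp add: fdspace_zero)

lemma perp_s_diff:
  assumes K: "bounded K" "K \<in> sets lebesgue"
    and V: "fdspace V" "\<forall>v\<in>V. continuous_on UNIV v" and "Vt \<subseteq> V"
    and v: "v \<in> perp_s K V Vt" "v' \<in> perp_s K V Vt"
  shows "v - v' \<in> perp_s K V Vt"
proof -
  have "integral K (\<lambda>x. (v x - v' x) * u x) = 0" if "u \<in> Vt" for u
    using integral_bilinear_diff_left[OF bounded_bilinear_mult K, of v v' u] that v V(2) \<open>Vt \<subseteq> V\<close>
    unfolding perp_s_def by auto
  then show ?thesis using v fdspace_diff[OF V(1)] unfolding perp_s_def by auto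
qed

lemma perp_v_diff:
  assumes K: "bounded K" "K \<in> sets lebesgue"
    and W: "fdspace W" "\<forall>w\<in>W. continuous_on UNIV w" and "Wt \<subseteq> W"
    and w: "w \<in> perp_v K W Wt" "w' \<in> perp_v K W Wt"
  shows "w - w' \<in> perp_v K W Wt"
proof -
  have "integral K (\<lambda>x. (w x - w' x) \<bullet> u x) = 0" if "u \<in> Wt" for u
    using integral_bilinear_diff_left[OF bounded_bilinear_inner K, of w w' u] that w W(2) \<open>Wt \<subseteq> W\<close>
    unfolding perp_v_def by auto
  then show ?thesis using w fdspace_diff[OF W(1)] unfolding perp_v_def by auto
qed

lemma compact_poly_boundary: "compact (poly_boundary vs)"
  unfolding poly_boundary_def edge_def by (intro compact_UN) auto

lemma bounded_poly_elem: "bounded (poly_elem vs)"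
  unfolding poly_elem_def by (simp add: bounded_inside compact_imp_bounded compact_poly_boundary)

lemma poly_elem_lebesgue: "poly_elem vs \<in> sets lebesgue"
  unfolding poly_elem_def by (simp add: open_inside compact_imp_closed compact_poly_boundary)

lemma additive_gam_s: "Modules.additive (gam_s vs)"
  by unfold_locales
    (auto simp: fun_eq_iff gam_s_def restr_def cross_vs_def vec_eq_iff forall_2 algebra_simps)

lemma additive_gam_v: "Modules.additive (gam_v vs)"
  by unfold_locales (auto simp: fun_eq_iff gam_v_def restr_def inner_add_left algebra_simps)

theorem lemma5p1:
  fixes vs :: "pt list"
    and V Vt :: "(pt \<Rightarrow> real) set"
    and W Wt M :: "(pt \<Rightarrow> pt) set"
  defines "K \<equiv> poly_elem vs"
  assumes polyg: "simple_polygon vs"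
    and V: "fdspace V" "\<forall>v\<in>V. poly2 v"
    and W: "fdspace W" "\<forall>w\<in>W. polyvec w"
    and M: "fdspace M" "\<forall>\<mu>\<in>M. \<forall>x. x \<notin> Gam vs \<longrightarrow> \<mu> x = 0"
    and Vt: "fdspace Vt" "Vt \<subseteq> V"
    and Wt: "fdspace Wt" "Wt \<subseteq> W"
    and trV: "\<forall>v\<in>V. gam_s vs v \<in> M"
    and trW: "\<forall>w\<in>W. gam_v vs w \<in> M"
    and curlV: "\<forall>v\<in>V. curl_s v \<in> Wt"
    and curlW: "\<forall>w\<in>W. curl_v w \<in> Vt"
    and nM: "\<forall>\<mu>\<in>M. (\<forall>x\<in>Gam vs. cross_vv (nrm vs x) (\<mu> x) = 0) \<longrightarrow> \<mu> = (\<lambda>x. 0)"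
  shows "bij_betw (\<lambda>(v, w). trc vs v w) (perp_s K V Vt \<times> perp_v K W Wt) M \<longleftrightarrow>
           inj_on (gam_s vs) (perp_s K V Vt) \<and>
           inj_on (gam_v vs) (perp_v K W Wt) \<and>
           gam_s vs ` perp_s K V Vt \<inter> gam_v vs ` perp_v K W Wt = {\<lambda>x. 0} \<and>
           {(\<lambda>x. a x + b x) | a b. a \<in> gam_s vs ` perp_s K V Vt \<and> b \<in> gam_v vs ` perp_v K W Wt} = M"
proof -
  have K: "bounded K" "K \<in> sets lebesgue"
    unfolding K_def by (rule bounded_poly_elem, rule poly_elem_lebesgue)
  have "\<forall>v\<in>V. continuous_on UNIV v" using V(2) poly2_continuous by blast
  then have P: "0 \<in> perp_s K V Vt"
      "\<And>v v'. v \<in> perp_s K V Vt \<Longrightarrow> v' \<in> perp_s K V Vt \<Longrightarrow> v - v' \<in> perp_s K V Vt"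
    using zero_in_perp_s[OF V(1)] perp_s_diff[OF K V(1) _ Vt(2)] by auto
  have "\<forall>w\<in>W. continuous_on UNIV w" using W(2) polyvec_continuous by blast
  then have Q: "0 \<in> perp_v K W Wt"
      "\<And>w w'. w \<in> perp_v K W Wt \<Longrightarrow> w' \<in> perp_v K W Wt \<Longrightarrow> w - w' \<in> perp_v K W Wt"
    using zero_in_perp_v[OF W(1)] perp_v_diff[OF K W(1) _ Wt(2)] by auto
  have "trc vs v w = gam_s vs v + gam_v vs w" for v w
    by (simp add: trc_def plus_fun_def)
  then show ?thesis
    using bij_betw_sum_of_additive_iff[OF additive_gam_s additive_gam_v P Q, where M = M]
    by (simp add: plus_fun_def zero_fun_def)
qed

end
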